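(* Let $\rho$ be a probability distribution on $\mathcal S$ with $\min_i\rho_i>0$. Suppose $Y=(S,B,S')$ is random with $S\sim\rho$, $\mathbb P(S'=j\mid S=i)=P_{ij}$ and $B\mid(S=i,S'=j)\sim\nu_{ij}$ for all $i,j\in\mathcal S$. Then $\mathbb E[H(p,Y)]=h_\rho(p)$ for all $p\in\Delta_d^{\mathcal S}$ (expectation taken coordinatewise), $h_\rho$ is non-expansive in $\ell^\Theta_{\mathrm C,\infty}$, and $\mathrm{fix}(h_\rho)=\mathrm{fix}(\mathcal G)$. In particular, these conclusions hold with $\rho=\mu$.
   Context: Finite MDP with state set $\mathcal{S}=\{1,\dots,m\}$, finite action set, deterministic rewards in $[0,1]$, fixed policy inducing a transition matrix $P=(P_{ij})$ on $\mathcal S$ that is irreducible and aperiodic with stationary distribution $\mu$. $R_{ij}$ is the finite-valued random one-step reward conditioned on transition $i\to j$; gain $\bar r^\pi=\sum_i\mu_i\sum_jP_{ij}\mathbb E[R_{ij}]$; $\nu_{ij}:=\mathrm{Law}(R_{ij}-\bar r^\pi)$. $\Theta=\{\theta_1<\dots<\theta_d\}$ with constant stride $\Delta>0$; $\Delta_d$ the probability simplex of $\mathbb R^d$; $\Delta_d^{\mathcal S}$ families $(p_i)_{i\in\mathcal S}$ with $p_i\in\Delta_d$. For $u\in\Delta_d$, $\eta^{u,0}:=\sum_ku_k\delta_{\theta_k}$. Categorical projection $\Pi^\Theta_{\mathrm C}$: $\delta_x\mapsto\delta_{\theta_1}$ if $x\le\theta_1$, $\delta_{\theta_d}$ if $x\ge\theta_d$,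 $\frac{\theta_{k+1}-x}{\Delta}\delta_{\theta_k}+\frac{x-\theta_k}{\Delta}\delta_{\theta_{k+1}}$ if $\theta_k\le x\le\theta_{k+1}$, extended linearly to probability laws. For $b\in\mathbb R$, $L_bu\in\Delta_d$ is defined by $\Pi^\Theta_{\mathrm C}(\text{law of }X+b,\ X\sim\eta^{u,0})=\eta^{L_bu,0}$. $\mathcal G(p)$ is the unique $q\in\Delta_d^{\mathcal S}$ with $\eta^{q_i,0}=\Pi^\Theta_{\mathrm C}\bigl(\sum_jP_{ij}(\nu_{ij}\ast\eta^{p_j,0})\bigr)$ for all $i$. One-sample backup: for $y=(s,b,s')\in\mathcal S\times[-1,1]\times\mathcal S$, $H(p,y)=q$ with $q_u=p_u$ ($u\ne s$), $q_s=L_bp_{s'}$. Mean-field map $h_\rho(p)_i:=(1-\rho_i)p_i+\rho_i\mathcal G(p)_i$, i.e. $h_\rho(p)=p+D_\rho(\mathcal G(p)-p)$ with $D_\rho=\mathrm{diag}(\rho)$. $\mathrm{fix}(F)$ is the fixed-point set of $F$. Coordinate Cramér metric: $F_u(\theta_k):=\sum_{j\le k}u_j$, $\ell^\Theta_{\mathrm C}(u,v)^2:=\Delta\sum_{k=1}^{d-1}(F_u(\theta_k)-F_v(\theta_k))^2$, $\ell^\Theta_{\mathrm C,\infty}(p,q):=\max_i\ell^\Theta_{\mathrm C}(p_i,q_i)$. *)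

theory Defs
  imports "HOL-Probability.Probability"
begin

(* Transition matrix P_{ij} = pmf (P i) j, i.e. P :: 's => 's pmf.
   Vectors u in Delta_d: functions nat => real, supported in {1..d}. *)

definition theta :: "real \<Rightarrow> real \<Rightarrow> nat \<Rightarrow> real" where
  "theta th1 Dl k = th1 + (real k - 1) * Dl"

definition cat_simplex :: "nat \<Rightarrow> (nat \<Rightarrow> real) set" where
  "cat_simplex d = {u. (\<forall>k\<in>{1..d}. 0 \<le> u k) \<and> (\<forall>k. k \<notin> {1..d} \<longrightarrow> u k = 0)
                   \<and> (\<Sum>k=1..d. u k) = 1}"

definition cat_simplex_fam :: "nat \<Rightarrow> ('s \<Rightarrow> nat \<Rightarrow> real) set" where
  "cat_simplex_fam d = {p. \<forall>i. p i \<in> cat_simplex d}"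

definition eta :: "real \<Rightarrow> real \<Rightarrow> nat \<Rightarrow> (nat \<Rightarrow> real) \<Rightarrow> real pmf" where
  "eta th1 Dl d u = embed_pmf (\<lambda>x. \<Sum>k\<in>{1..d}. if theta th1 Dl k = x then u k else 0)"

definition projpt :: "real \<Rightarrow> real \<Rightarrow> nat \<Rightarrow> real \<Rightarrow> nat \<Rightarrow> real" where
  "projpt th1 Dl d x k =
     (if k \<notin> {1..d} then 0
      else if x \<le> theta th1 Dl 1 then (if k = 1 then 1 else 0)
      else if x \<ge> theta th1 Dl d then (if k = d then 1 else 0)
      else if theta th1 Dl k \<le> x \<and> x \<le> theta th1 Dl (k+1) then (theta th1 Dl (k+1) - x) / Dl
      else if k \<ge> 2 \<and> theta th1 Dl (k-1) \<le> x \<and> x \<le> theta th1 Dl k then (x - theta th1 Dl (k-1)) / Dl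
      else 0)"

(* Categorical projection extended linearly to (finitely supported) laws;
   the result eta^{q,0} is represented by its weight vector q *)
definition projC :: "real \<Rightarrow> real \<Rightarrow> nat \<Rightarrow> real pmf \<Rightarrow> nat \<Rightarrow> real" where
  "projC th1 Dl d nu k = measure_pmf.expectation nu (\<lambda>x. projpt th1 Dl d x k)"

definition Lshift :: "real \<Rightarrow> real \<Rightarrow> nat \<Rightarrow> real \<Rightarrow> (nat \<Rightarrow> real) \<Rightarrow> nat \<Rightarrow> real" where
  "Lshift th1 Dl d b u = projC th1 Dl d (map_pmf (\<lambda>x. x + b) (eta th1 Dl d u))"

definition conv_pmf :: "real pmf \<Rightarrow> real pmf \<Rightarrow> real pmf" where
  "conv_pmf nu eta' = map_pmf (\<lambda>(a, x). a + x) (pair_pmf nu eta')"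

definition gain :: "('s::finite) pmf \<Rightarrow> ('s \<Rightarrow> 's pmf) \<Rightarrow> ('s \<Rightarrow> 's \<Rightarrow> real pmf) \<Rightarrow> real" where
  "gain mu P R = (\<Sum>i\<in>UNIV. pmf mu i * (\<Sum>j\<in>UNIV. pmf (P i) j * measure_pmf.expectation (R i j) (\<lambda>r. r)))"

definition nuR :: "('s::finite) pmf \<Rightarrow> ('s \<Rightarrow> 's pmf) \<Rightarrow> ('s \<Rightarrow> 's \<Rightarrow> real pmf) \<Rightarrow> 's \<Rightarrow> 's \<Rightarrow> real pmf" where
  "nuR mu P R i j = map_pmf (\<lambda>r. r - gain mu P R) (R i j)"

definition Gop :: "real \<Rightarrow> real \<Rightarrow> nat \<Rightarrow> ('s::finite) pmf \<Rightarrow> ('s \<Rightarrow> 's pmf) \<Rightarrow> ('s \<Rightarrow> 's \<Rightarrow> real pmf)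
                   \<Rightarrow> ('s \<Rightarrow> nat \<Rightarrow> real) \<Rightarrow> 's \<Rightarrow> nat \<Rightarrow> real" where
  "Gop th1 Dl d mu P R p i = projC th1 Dl d
      (bind_pmf (P i) (\<lambda>j. conv_pmf (nuR mu P R i j) (eta th1 Dl d (p j))))"

definition Hbk :: "real \<Rightarrow> real \<Rightarrow> nat \<Rightarrow> ('s \<Rightarrow> nat \<Rightarrow> real) \<Rightarrow> 's \<times> real \<times> 's \<Rightarrow> 's \<Rightarrow> nat \<Rightarrow> real" where
  "Hbk th1 Dl d p y = (case y of (s, b, s') \<Rightarrow> p(s := Lshift th1 Dl d b (p s')))"

definition hrho :: "real \<Rightarrow> real \<Rightarrow> nat \<Rightarrow> ('s::finite) pmf \<Rightarrow> ('s \<Rightarrow> 's pmf) \<Rightarrow> ('s \<Rightarrow> 's \<Rightarrow> real pmf)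
                   \<Rightarrow> 's pmf \<Rightarrow> ('s \<Rightarrow> nat \<Rightarrow> real) \<Rightarrow> 's \<Rightarrow> nat \<Rightarrow> real" where
  "hrho th1 Dl d mu P R rho p i =
     (\<lambda>k. (1 - pmf rho i) * p i k + pmf rho i * Gop th1 Dl d mu P R p i k)"

definition fixset :: "nat \<Rightarrow> (('s \<Rightarrow> nat \<Rightarrow> real) \<Rightarrow> ('s \<Rightarrow> nat \<Rightarrow> real)) \<Rightarrow> ('s \<Rightarrow> nat \<Rightarrow> real) set" where
  "fixset d F = {p \<in> cat_simplex_fam d. F p = p}"

definition cdf :: "(nat \<Rightarrow> real) \<Rightarrow> nat \<Rightarrow> real" where
  "cdf u k = (\<Sum>j=1..k. u j)"

definition cramer :: "real \<Rightarrow> nat \<Rightarrow> (nat \<Rightarrow> real) \<Rightarrow> (nat \<Rightarrow> real) \<Rightarrow> real" where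
  "cramer Dl d u v = sqrt (Dl * (\<Sum>k=1..d-1. (cdf u k - cdf v k)^2))"

definition cramer_inf :: "real \<Rightarrow> nat \<Rightarrow> (('s::finite) \<Rightarrow> nat \<Rightarrow> real) \<Rightarrow> ('s \<Rightarrow> nat \<Rightarrow> real) \<Rightarrow> real" where
  "cramer_inf Dl d p q = Max (range (\<lambda>i. cramer Dl d (p i) (q i)))"

primrec Pn :: "('s \<Rightarrow> 's pmf) \<Rightarrow> nat \<Rightarrow> 's \<Rightarrow> 's pmf" where
  "Pn P 0 i = return_pmf i"
| "Pn P (Suc n) i = bind_pmf (Pn P n i) P"

definition irreducible_chain :: "('s \<Rightarrow> 's pmf) \<Rightarrow> bool" where
  "irreducible_chain P \<longleftrightarrow> (\<forall>i j. \<exists>n>0. pmf (Pn P n i) j > 0)"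

definition aperiodic_chain :: "('s \<Rightarrow> 's pmf) \<Rightarrow> bool" where
  "aperiodic_chain P \<longleftrightarrow> (\<forall>i. Gcd {n. n > 0 \<and> pmf (Pn P n i) i > 0} = 1)"

definition stationary :: "('s \<Rightarrow> 's pmf) \<Rightarrow> 's pmf \<Rightarrow> bool" where
  "stationary P mu \<longleftrightarrow> bind_pmf mu P = mu"

definition prop5_concl :: "real \<Rightarrow> real \<Rightarrow> nat \<Rightarrow> ('s::finite) pmf \<Rightarrow> ('s \<Rightarrow> 's pmf) \<Rightarrow> ('s \<Rightarrow> 's \<Rightarrow> real pmf)
                         \<Rightarrow> 's pmf \<Rightarrow> bool" where
  "prop5_concl th1 Dl d mu P R rho \<longleftrightarrow>
     (\<forall>Y :: ('s \<times> real \<times> 's) pmf.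
        (\<forall>i b j. pmf Y (i, b, j) = pmf rho i * pmf (P i) j * pmf (nuR mu P R i j) b) \<longrightarrow>
        (\<forall>p\<in>cat_simplex_fam d.
           (\<lambda>u k. measure_pmf.expectation Y (\<lambda>y. Hbk th1 Dl d p y u k))
             = hrho th1 Dl d mu P R rho p))
   \<and> (\<forall>p\<in>cat_simplex_fam d. \<forall>q\<in>cat_simplex_fam d.
        cramer_inf Dl d (hrho th1 Dl d mu P R rho p) (hrho th1 Dl d mu P R rho q)
          \<le> cramer_inf Dl d p q)
   \<and> fixset d (hrho th1 Dl d mu P R rho) = fixset d (Gop th1 Dl d mu P R)"

end

theory Submission
  imports Defs
begin

text \<open>
  Conditioning on the sampled state S: the backup replaces coordinate S by L_b p_{S'}, whose
  average over (B, S') is G(p)_S, so coordinate i of the expected backup is G(p)_i with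
  probability rho_i and p_i otherwise, i.e. h_rho(p)_i. In CDF coordinates L_b acts, after
  summation by parts, through a doubly substochastic matrix, so it does not increase the squared
  Cramer distance; G(p)_i and h_rho(p)_i are mixtures of such maps, and by Cauchy-Schwarz the
  squared distance of two mixtures is at most the mixture of the squared distances. Fixed points
  agree because every rho_i is positive, and mu is positive by irreducibility and stationarity.
\<close>

lemma sum_by_parts_nat:
  fixes D f :: "nat \<Rightarrow> 'a::comm_ring"
  assumes "D 0 = 0"
  shows "(\<Sum>j=1..n. (D j - D (j - 1)) * f j) = (\<Sum>j=1..n-1. D j * (f j - f (Suc j))) + D n * f n"
proof (induction n)
  case (Suc n)
  then show ?case
    using assms by (cases n) (simp_all add: algebra_simps)
qed (simp add: assms)

lemma weighted_square_sum_le: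
  fixes w D :: "'a \<Rightarrow> real"
  assumes "\<And>j. j \<in> J \<Longrightarrow> 0 \<le> w j"
  shows "(\<Sum>j\<in>J. w j * D j)\<^sup>2 \<le> (\<Sum>j\<in>J. w j) * (\<Sum>j\<in>J. w j * (D j)\<^sup>2)"
proof -
  have "(\<Sum>j\<in>J. w j * D j) = (\<Sum>j\<in>J. sqrt (w j) * (sqrt (w j) * D j))"
    using assms by (intro sum.cong refl) (simp add: mult.assoc[symmetric])
  also have "\<dots>\<^sup>2 \<le> (\<Sum>j\<in>J. (sqrt (w j))\<^sup>2) * (\<Sum>j\<in>J. (sqrt (w j) * D j)\<^sup>2)"
    by (rule Cauchy_Schwarz_ineq_sum)
  also have "\<dots> = (\<Sum>j\<in>J. w j) * (\<Sum>j\<in>J. w j * (D j)\<^sup>2)"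
    using assms by (simp add: power_mult_distrib)
  finally show ?thesis .
qed

lemma substochastic_square_sum_le:
  fixes a :: "'k \<Rightarrow> 'j \<Rightarrow> real" and D :: "'j \<Rightarrow> real"
  assumes "finite K" "finite J"
    and nonneg: "\<And>k j. k \<in> K \<Longrightarrow> j \<in> J \<Longrightarrow> 0 \<le> a k j"
    and rows: "\<And>k. k \<in> K \<Longrightarrow> (\<Sum>j\<in>J. a k j) \<le> 1"
    and cols: "\<And>j. j \<in> J \<Longrightarrow> (\<Sum>k\<in>K. a k j) \<le> 1"
  shows "(\<Sum>k\<in>K. (\<Sum>j\<in>J. a k j * D j)\<^sup>2) \<le> (\<Sum>j\<in>J. (D j)\<^sup>2)"
proof -
  have "(\<Sum>j\<in>J. a k j * D j)\<^sup>2 \<le> (\<Sum>j\<in>J. a k j * (D j)\<^sup>2)" if k: "k \<in> K" for k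
  proof -
    have "(\<Sum>j\<in>J. a k j * D j)\<^sup>2 \<le> (\<Sum>j\<in>J. a k j) * (\<Sum>j\<in>J. a k j * (D j)\<^sup>2)"
      using nonneg[OF k] by (rule weighted_square_sum_le)
    also have "\<dots> \<le> (\<Sum>j\<in>J. a k j * (D j)\<^sup>2)"
      using rows[OF k] nonneg[OF k] by (intro mult_left_le_one_le sum_nonneg) auto
    finally show ?thesis .
  qed
  then have "(\<Sum>k\<in>K. (\<Sum>j\<in>J. a k j * D j)\<^sup>2) \<le> (\<Sum>k\<in>K. \<Sum>j\<in>J. a k j * (D j)\<^sup>2)"
    by (rule sum_mono)
  also have "\<dots> = (\<Sum>j\<in>J. (\<Sum>k\<in>K. a k j) * (D j)\<^sup>2)"
    by (subst sum.swap) (simp add: sum_distrib_right)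
  also have "\<dots> \<le> (\<Sum>j\<in>J. (D j)\<^sup>2)"
    using cols nonneg by (intro sum_mono mult_left_le_one_le sum_nonneg) auto
  finally show ?thesis .
qed

definition cdf_dist_sq :: "nat \<Rightarrow> (nat \<Rightarrow> real) \<Rightarrow> (nat \<Rightarrow> real) \<Rightarrow> real" where
  "cdf_dist_sq d u v = (\<Sum>k=1..d-1. (cdf u k - cdf v k)\<^sup>2)"

lemma cramer_eq_sqrt_cdf_dist_sq: "cramer Dl d u v = sqrt (Dl * cdf_dist_sq d u v)"
  by (simp add: cramer_def cdf_dist_sq_def)

lemma cramer_inf_eq_sqrt_Max:
  fixes p q :: "'s::finite \<Rightarrow> nat \<Rightarrow> real"
  assumes "Dl \<ge> 0"
  shows "cramer_inf Dl d p q = sqrt (Dl * (MAX i. cdf_dist_sq d (p i) (q i)))"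
proof -
  have "mono (\<lambda>x. sqrt (Dl * x))"
    using assms by (intro monoI real_sqrt_le_mono mult_left_mono)
  then show ?thesis
    unfolding cramer_inf_def cramer_eq_sqrt_cdf_dist_sq
    by (subst mono_Max_commute) (auto simp: image_image)
qed

lemma cdf_mixture: "cdf (\<lambda>k. \<Sum>z\<in>Z. w z * U z k) j = (\<Sum>z\<in>Z. w z * cdf (U z) j)"
  unfolding cdf_def by (subst sum.swap) (simp add: sum_distrib_left)

lemma cdf_dist_sq_mixture_le:
  fixes w :: "'z \<Rightarrow> real" and U V :: "'z \<Rightarrow> nat \<Rightarrow> real"
  assumes "finite Z" and nonneg: "\<And>z. z \<in> Z \<Longrightarrow> 0 \<le> w z" and total: "sum w Z = 1"
    and bound: "\<And>z. z \<in> Z \<Longrightarrow> cdf_dist_sq d (U z) (V z) \<le> T"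
  shows "cdf_dist_sq d (\<lambda>k. \<Sum>z\<in>Z. w z * U z k) (\<lambda>k. \<Sum>z\<in>Z. w z * V z k) \<le> T"
proof -
  have "cdf_dist_sq d (\<lambda>k. \<Sum>z\<in>Z. w z * U z k) (\<lambda>k. \<Sum>z\<in>Z. w z * V z k)
      = (\<Sum>k=1..d-1. (\<Sum>z\<in>Z. w z * (cdf (U z) k - cdf (V z) k))\<^sup>2)"
    by (simp add: cdf_dist_sq_def cdf_mixture sum_subtractf[symmetric] right_diff_distrib)
  also have "\<dots> \<le> (\<Sum>k=1..d-1. \<Sum>z\<in>Z. w z * (cdf (U z) k - cdf (V z) k)\<^sup>2)"
    using weighted_square_sum_le[of Z w] nonneg total by (intro sum_mono) auto
  also have "\<dots> = (\<Sum>z\<in>Z. w z * cdf_dist_sq d (U z) (V z))"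
    by (subst sum.swap) (simp add: cdf_dist_sq_def sum_distrib_left)
  also have "\<dots> \<le> (\<Sum>z\<in>Z. w z * T)"
    using nonneg bound by (intro sum_mono mult_left_mono) auto
  finally show ?thesis
    by (simp add: sum_distrib_right[symmetric] total)
qed

lemma expectation_finite_support:
  fixes f :: "'a \<Rightarrow> real"
  assumes "finite A" "set_pmf M \<subseteq> A"
  shows "measure_pmf.expectation M f = (\<Sum>x\<in>A. pmf M x * f x)"
  using assms by (subst integral_measure_pmf_real[of A]) (auto simp: mult.commute)

lemma expectation_bind_pmf_finite:
  fixes f :: "'b \<Rightarrow> real"
  assumes "finite (set_pmf M)" "\<And>x. x \<in> set_pmf M \<Longrightarrow> finite (set_pmf (N x))"
  shows "measure_pmf.expectation (bind_pmf M N) f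
       = measure_pmf.expectation M (\<lambda>x. measure_pmf.expectation (N x) f)"
  using assms by (simp add: pmf_expectation_bind[of "set_pmf M"] expectation_finite_support)

lemma expectation_conv_pmf:
  fixes f :: "real \<Rightarrow> real"
  assumes "finite (set_pmf M)" "finite (set_pmf N)"
  shows "measure_pmf.expectation (conv_pmf M N) f
       = measure_pmf.expectation M (\<lambda>a. measure_pmf.expectation N (\<lambda>x. f (a + x)))"
  using assms
  by (simp add: conv_pmf_def integral_map_pmf pair_pmf_def expectation_bind_pmf_finite case_prod_unfold)

locale categorical_grid =
  fixes th1 Dl :: real and d :: nat
  assumes stride_pos: "Dl > 0" and atoms_nonempty: "d \<ge> 1"
begin

abbreviation "\<theta> \<equiv> theta th1 Dl"
abbreviation "\<eta> \<equiv> eta th1 Dl d"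
abbreviation "L \<equiv> Lshift th1 Dl d"

lemma theta_eq_iff: "\<theta> k = \<theta> j \<longleftrightarrow> k = j"
  using stride_pos by (auto simp: theta_def)

lemma pmf_eta:
  assumes "u \<in> cat_simplex d"
  shows "pmf (\<eta> u) x = (\<Sum>k\<in>{1..d}. if \<theta> k = x then u k else 0)"
  unfolding eta_def
proof (rule pmf_embed_pmf)
  have off_atoms: "(\<Sum>k\<in>{1..d}. if \<theta> k = x then u k else 0) = 0" if "x \<notin> \<theta> ` {1..d}" for x
    using that by (intro sum.neutral) auto
  have "(\<integral>\<^sup>+ x. ennreal (\<Sum>k\<in>{1..d}. if \<theta> k = x then u k else 0) \<partial>count_space UNIV)
      = (\<Sum>x\<in>\<theta> ` {1..d}. ennreal (\<Sum>k\<in>{1..d}. if \<theta> k = x then u k else 0))"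
    using off_atoms by (intro nn_integral_count_space') auto
  also have "\<dots> = ennreal (\<Sum>x\<in>\<theta> ` {1..d}. \<Sum>k\<in>{1..d}. if \<theta> k = x then u k else 0)"
    using assms by (intro sum_ennreal) (auto simp: cat_simplex_def intro!: sum_nonneg)
  also have "(\<Sum>x\<in>\<theta> ` {1..d}. \<Sum>k\<in>{1..d}. if \<theta> k = x then u k else 0) = 1"
    using assms by (subst sum.swap) (simp add: sum.delta' cat_simplex_def)
  finally show "(\<integral>\<^sup>+ x. ennreal (\<Sum>k\<in>{1..d}. if \<theta> k = x then u k else 0) \<partial>count_space UNIV) = 1"
    by simp
qed (use assms in \<open>auto simp: cat_simplex_def intro!: sum_nonneg\<close>)

lemma set_pmf_eta_subset:
  assumes "u \<in> cat_simplex d"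
  shows "set_pmf (\<eta> u) \<subseteq> \<theta> ` {1..d}"
proof
  fix x assume "x \<in> set_pmf (\<eta> u)"
  then have "(\<Sum>k\<in>{1..d}. if \<theta> k = x then u k else 0) \<noteq> 0"
    by (simp add: set_pmf_iff pmf_eta[OF assms])
  then show "x \<in> \<theta> ` {1..d}"
    by (rule contrapos_np) (auto intro!: sum.neutral)
qed

lemma finite_set_pmf_eta: "u \<in> cat_simplex d \<Longrightarrow> finite (set_pmf (\<eta> u))"
  using finite_subset[OF set_pmf_eta_subset] by blast

lemma expectation_eta:
  fixes f :: "real \<Rightarrow> real"
  assumes "u \<in> cat_simplex d"
  shows "measure_pmf.expectation (\<eta> u) f = (\<Sum>j=1..d. u j * f (\<theta> j))"
proof -
  have "measure_pmf.expectation (\<eta> u) f = (\<Sum>x\<in>\<theta> ` {1..d}. f x * pmf (\<eta> u) x)"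
    using set_pmf_eta_subset[OF assms] by (intro integral_measure_pmf_real) auto
  also have "\<dots> = (\<Sum>j=1..d. f (\<theta> j) * pmf (\<eta> u) (\<theta> j))"
    using theta_eq_iff by (intro sum.reindex_cong[OF _ refl refl]) (auto simp: inj_on_def)
  also have "\<dots> = (\<Sum>j=1..d. u j * f (\<theta> j))"
    using assms by (intro sum.cong refl) (simp add: pmf_eta theta_eq_iff sum.delta)
  finally show ?thesis .
qed

lemma projpt_grid_coordinates:
  "projpt th1 Dl d (th1 + t * Dl) k =
     (if k \<notin> {1..d} then 0
      else if t \<le> 0 then (if k = 1 then 1 else 0)
      else if t \<ge> real d - 1 then (if k = d then 1 else 0)
      else if real k - 1 \<le> t \<and> t \<le> real k then real k - t
      else if k \<ge> 2 \<and> real k - 2 \<le> t \<and> t \<le> real k - 1 then t - (real k - 2)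
      else 0)"
proof -
  have le_iff: "\<theta> a \<le> th1 + t * Dl \<longleftrightarrow> real a - 1 \<le> t"
    and ge_iff: "th1 + t * Dl \<le> \<theta> a \<longleftrightarrow> t \<le> real a - 1" for a
    using stride_pos by (simp_all add: theta_def mult_le_cancel_right_pos)
  have right_weight: "(\<theta> a - (th1 + t * Dl)) / Dl = real a - 1 - t"
    and left_weight: "(th1 + t * Dl - \<theta> a) / Dl = t - (real a - 1)" for a
    using stride_pos by (simp_all add: theta_def field_simps)
  show ?thesis
    unfolding projpt_def le_iff ge_iff right_weight left_weight
    by (auto simp: of_nat_diff algebra_simps)
qed

lemma cdf_projpt:
  assumes "1 \<le> k" "k < d"
  shows "cdf (projpt th1 Dl d (th1 + t * Dl)) k = max 0 (min 1 (real k - t))"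
  using assms
proof (induction k)
  case (Suc k)
  then show ?case
    by (cases "k = 0") (auto simp: cdf_def projpt_grid_coordinates)
qed simp

lemma Lshift_eq_sum:
  assumes "u \<in> cat_simplex d"
  shows "L b u = (\<lambda>k. \<Sum>j=1..d. u j * projpt th1 Dl d (\<theta> j + b) k)"
  unfolding Lshift_def projC_def integral_map_pmf using expectation_eta[OF assms] by simp

lemma cdf_Lshift:
  assumes "u \<in> cat_simplex d" "1 \<le> k" "k < d"
  shows "cdf (L b u) k = (\<Sum>j=1..d. u j * max 0 (min 1 (real k - real j + 1 - b / Dl)))"
proof -
  have "cdf (projpt th1 Dl d (\<theta> j + b)) k = max 0 (min 1 (real k - real j + 1 - b / Dl))" for j
  proof -
    have shift: "\<theta> j + b = th1 + (real j - 1 + b / Dl) * Dl"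
      using stride_pos by (simp add: theta_def field_simps)
    show ?thesis
      unfolding shift cdf_projpt[OF assms(2,3)] by (simp add: algebra_simps)
  qed
  then show ?thesis
    using assms(1) by (simp add: Lshift_eq_sum cdf_mixture)
qed

lemma cdf_dist_sq_Lshift_le:
  assumes u: "u \<in> cat_simplex d" and v: "v \<in> cat_simplex d"
  shows "cdf_dist_sq d (L b u) (L b v) \<le> cdf_dist_sq d u v"
proof -
  define \<phi> where "\<phi> k j = max 0 (min 1 (real k - real j + 1 - b / Dl))" for k j :: nat
  define a where "a k j = \<phi> k j - \<phi> k (Suc j)" for k j
  define D where "D j = cdf u j - cdf v j" for j
  have \<phi>_01: "0 \<le> \<phi> k j" "\<phi> k j \<le> 1" for k j
    by (simp_all add: \<phi>_def)
  have D_0: "D 0 = 0" and D_d: "D d = 0"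
    using u v by (simp_all add: D_def cdf_def cat_simplex_def)
  have increments: "u j - v j = D j - D (j - 1)" if "j \<ge> 1" for j
    using that by (cases j) (simp_all add: D_def cdf_def)
  have cdf_diff: "cdf (L b u) k - cdf (L b v) k = (\<Sum>j=1..d-1. a k j * D j)"
    if "k \<in> {1..d-1}" for k
  proof -
    have "1 \<le> k" "k < d"
      using that atoms_nonempty by auto
    then have "cdf (L b u) k - cdf (L b v) k = (\<Sum>j=1..d. (u j - v j) * \<phi> k j)"
      using u v by (simp add: cdf_Lshift \<phi>_def sum_subtractf[symmetric] left_diff_distrib)
    also have "\<dots> = (\<Sum>j=1..d. (D j - D (j - 1)) * \<phi> k j)"
      by (intro sum.cong refl) (simp add: increments)
    also have "\<dots> = (\<Sum>j=1..d-1. a k j * D j)"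
      unfolding sum_by_parts_nat[where D=D, OF D_0] D_d by (simp add: a_def mult.commute)
    finally show ?thesis .
  qed
  have "cdf_dist_sq d (L b u) (L b v) = (\<Sum>k=1..d-1. (\<Sum>j=1..d-1. a k j * D j)\<^sup>2)"
    unfolding cdf_dist_sq_def by (intro sum.cong refl) (simp add: cdf_diff)
  \<comment> \<open>The matrix a is doubly substochastic: rows telescope in j and, since
    \<phi> k (Suc j) = \<phi> (k - 1) j, columns telescope in k.\<close>
  also have "\<dots> \<le> (\<Sum>j=1..d-1. (D j)\<^sup>2)"
  proof (rule substochastic_square_sum_le)
    show "0 \<le> a k j" for k j
      by (simp add: a_def \<phi>_def)
    show "(\<Sum>j=1..d-1. a k j) \<le> 1" for k
      using sum_Suc_diff[of 1 "d - 1" "\<lambda>j. - \<phi> k j"] \<phi>_01[of k 1] \<phi>_01[of k d] atoms_nonempty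
      by (simp add: a_def)
    show "(\<Sum>k=1..d-1. a k j) \<le> 1" for j
    proof -
      have "(\<Sum>k=1..d-1. a k j) = (\<Sum>k=Suc 0..d-1. \<phi> k j - \<phi> (k - 1) j)"
        by (intro sum.cong refl) (auto simp: a_def \<phi>_def of_nat_diff algebra_simps)
      also have "\<dots> = \<phi> (d - 1) j - \<phi> 0 j"
        by (rule sum_telescope'') simp
      finally show ?thesis
        using \<phi>_01[of "d - 1" j] \<phi>_01[of 0 j] by simp
    qed
  qed simp_all
  also have "\<dots> = cdf_dist_sq d u v"
    by (simp add: cdf_dist_sq_def D_def)
  finally show ?thesis .
qed

end

lemma fixset_hrho_eq_fixset_Gop:
  assumes "\<And>i. pmf rho i > 0"
  shows "fixset d (hrho th1 Dl d mu P R rho) = fixset d (Gop th1 Dl d mu P R)"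
proof -
  have "pmf rho i \<noteq> 0" for i
    using assms[of i] by simp
  then have "hrho th1 Dl d mu P R rho p = p \<longleftrightarrow> Gop th1 Dl d mu P R p = p" for p
    by (simp add: fun_eq_iff hrho_def algebra_simps)
  then show ?thesis
    by (simp add: fixset_def)
qed

locale categorical_td = categorical_grid +
  fixes mu :: "'s::finite pmf" and P :: "'s \<Rightarrow> 's pmf" and R :: "'s \<Rightarrow> 's \<Rightarrow> real pmf"
  assumes finite_rewards: "\<And>i j. finite (set_pmf (R i j))"
begin

abbreviation "\<nu> \<equiv> nuR mu P R"
abbreviation "G \<equiv> Gop th1 Dl d mu P R"
abbreviation "h \<equiv> hrho th1 Dl d mu P R"

definition reward_shifts :: "real set" where
  "reward_shifts = (\<Union>i j. set_pmf (\<nu> i j))"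

lemma finite_reward_shifts: "finite reward_shifts"
  using finite_rewards by (simp add: reward_shifts_def nuR_def)

lemma set_pmf_nu_subset: "set_pmf (\<nu> i j) \<subseteq> reward_shifts"
  by (auto simp: reward_shifts_def)

definition step_weight :: "'s \<Rightarrow> 's \<times> real \<Rightarrow> real" where
  "step_weight i z = pmf (P i) (fst z) * pmf (\<nu> i (fst z)) (snd z)"

lemma step_weight_nonneg: "0 \<le> step_weight i z"
  by (simp add: step_weight_def)

lemma sum_step_weight: "(\<Sum>z\<in>UNIV \<times> reward_shifts. step_weight i z) = 1"
proof -
  have "(\<Sum>z\<in>UNIV \<times> reward_shifts. step_weight i z)
      = (\<Sum>j\<in>UNIV. pmf (P i) j * (\<Sum>b\<in>reward_shifts. pmf (\<nu> i j) b))"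
    by (simp add: step_weight_def sum.cartesian_product' sum_distrib_left)
  also have "\<dots> = 1"
    using finite_reward_shifts set_pmf_nu_subset by (simp add: sum_pmf_eq_1)
  finally show ?thesis .
qed

lemma Gop_eq_mixture:
  assumes "p \<in> cat_simplex_fam d"
  shows "G p i = (\<lambda>k. \<Sum>z\<in>UNIV \<times> reward_shifts. step_weight i z * L (snd z) (p (fst z)) k)"
proof
  fix k
  have p: "p j \<in> cat_simplex d" for j
    using assms by (simp add: cat_simplex_fam_def)
  have finite_nu: "finite (set_pmf (\<nu> i j))" for j
    using finite_subset[OF set_pmf_nu_subset finite_reward_shifts] .
  have L_as_expectation: "L b (p j) k = measure_pmf.expectation (\<eta> (p j)) (\<lambda>x. projpt th1 Dl d (b + x) k)"
    for b j
    by (simp add: Lshift_def projC_def add.commute)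
  have "G p i k = measure_pmf.expectation (P i)
      (\<lambda>j. measure_pmf.expectation (\<nu> i j) (\<lambda>b. L b (p j) k))"
  proof -
    have "finite (set_pmf (conv_pmf (\<nu> i j) (\<eta> (p j))))" for j
      using finite_nu finite_set_pmf_eta[OF p] by (simp add: conv_pmf_def)
    then show ?thesis
      unfolding Gop_def projC_def L_as_expectation
      using finite_nu finite_set_pmf_eta[OF p]
      by (simp add: expectation_bind_pmf_finite expectation_conv_pmf)
  qed
  also have "\<dots> = (\<Sum>j\<in>UNIV. pmf (P i) j * (\<Sum>b\<in>reward_shifts. pmf (\<nu> i j) b * L b (p j) k))"
    using finite_reward_shifts set_pmf_nu_subset by (simp add: expectation_finite_support)
  also have "\<dots> = (\<Sum>z\<in>UNIV \<times> reward_shifts. step_weight i z * L (snd z) (p (fst z)) k)"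
    by (simp add: step_weight_def sum.cartesian_product' sum_distrib_left mult_ac)
  finally show "G p i k = (\<Sum>z\<in>UNIV \<times> reward_shifts. step_weight i z * L (snd z) (p (fst z)) k)" .
qed

lemma expectation_Hbk:
  assumes p: "p \<in> cat_simplex_fam d"
    and Y: "\<And>i b j. pmf Y (i, b, j) = pmf rho i * pmf (P i) j * pmf (\<nu> i j) b"
  shows "(\<lambda>u k. measure_pmf.expectation Y (\<lambda>y. Hbk th1 Dl d p y u k)) = h rho p"
proof (intro ext)
  fix u k
  let ?B = reward_shifts
  have support: "set_pmf Y \<subseteq> UNIV \<times> ?B \<times> UNIV"
  proof (clarsimp simp: set_pmf_iff)
    fix i b j assume "pmf Y (i, b, j) \<noteq> 0"
    then show "b \<in> ?B"
      using Y set_pmf_nu_subset[of i j] by (auto simp: set_pmf_iff)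
  qed
  have backup_given_state: "(\<Sum>z\<in>UNIV \<times> ?B. step_weight i z * Hbk th1 Dl d p (i, snd z, fst z) u k)
      = (if u = i then G p u k else p u k)" for i
    using Gop_eq_mixture[OF p] sum_step_weight[of i]
    by (simp add: Hbk_def sum_distrib_right[symmetric])
  have "measure_pmf.expectation Y (\<lambda>y. Hbk th1 Dl d p y u k)
      = (\<Sum>i\<in>UNIV. \<Sum>b\<in>?B. \<Sum>j\<in>UNIV. pmf Y (i, b, j) * Hbk th1 Dl d p (i, b, j) u k)"
    by (subst expectation_finite_support[OF _ support])
      (simp_all add: finite_reward_shifts sum.cartesian_product')
  also have "\<dots> = (\<Sum>i\<in>UNIV. pmf rho i *
      (\<Sum>z\<in>UNIV \<times> ?B. step_weight i z * Hbk th1 Dl d p (i, snd z, fst z) u k))"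
    by (simp add: Y step_weight_def sum.cartesian_product' sum_distrib_left mult_ac sum.swap[of _ ?B])
  also have "\<dots> = (\<Sum>i\<in>UNIV. pmf rho i * p u k + (if i = u then pmf rho i * (G p u k - p u k) else 0))"
    by (intro sum.cong refl) (simp add: backup_given_state algebra_simps)
  also have "\<dots> = (1 - pmf rho u) * p u k + pmf rho u * G p u k"
    by (simp add: sum.distrib sum_distrib_right[symmetric] sum_pmf_eq_1 algebra_simps)
  finally show "measure_pmf.expectation Y (\<lambda>y. Hbk th1 Dl d p y u k) = h rho p u k"
    by (simp add: hrho_def)
qed

lemma cdf_dist_sq_Gop_le:
  assumes p: "p \<in> cat_simplex_fam d" and q: "q \<in> cat_simplex_fam d"
    and bound: "\<And>j. cdf_dist_sq d (p j) (q j) \<le> T"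
  shows "cdf_dist_sq d (G p i) (G q i) \<le> T"
  unfolding Gop_eq_mixture[OF p] Gop_eq_mixture[OF q]
proof (rule cdf_dist_sq_mixture_le)
  fix z :: "'s \<times> real"
  have "p (fst z) \<in> cat_simplex d" "q (fst z) \<in> cat_simplex d"
    using p q by (simp_all add: cat_simplex_fam_def)
  then show "cdf_dist_sq d (L (snd z) (p (fst z))) (L (snd z) (q (fst z))) \<le> T"
    using cdf_dist_sq_Lshift_le bound order_trans by blast
qed (simp_all add: finite_reward_shifts step_weight_nonneg sum_step_weight)

lemma cdf_dist_sq_hrho_le:
  assumes p: "p \<in> cat_simplex_fam d" and q: "q \<in> cat_simplex_fam d"
    and bound: "\<And>j. cdf_dist_sq d (p j) (q j) \<le> T"
  shows "cdf_dist_sq d (h rho p i) (h rho q i) \<le> T"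
proof -
  have two_point: "h rho p' i = (\<lambda>k. \<Sum>z\<in>UNIV. (if z then pmf rho i else 1 - pmf rho i)
      * (if z then G p' i else p' i) k)" for p'
    by (simp add: hrho_def UNIV_bool)
  show ?thesis
    unfolding two_point
    by (rule cdf_dist_sq_mixture_le)
      (simp_all add: UNIV_bool pmf_le_1 bound cdf_dist_sq_Gop_le[OF p q bound])
qed

lemma cramer_inf_hrho_le:
  assumes "p \<in> cat_simplex_fam d" "q \<in> cat_simplex_fam d"
  shows "cramer_inf Dl d (h rho p) (h rho q) \<le> cramer_inf Dl d p q"
proof -
  have "cdf_dist_sq d (h rho p i) (h rho q i) \<le> (MAX j. cdf_dist_sq d (p j) (q j))" for i
    using assms by (rule cdf_dist_sq_hrho_le) simp
  then show ?thesis
    using stride_pos by (simp add: cramer_inf_eq_sqrt_Max)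
qed

lemma prop5_concl_if_pos:
  assumes "\<And>i. pmf rho i > 0"
  shows "prop5_concl th1 Dl d mu P R rho"
  using expectation_Hbk cramer_inf_hrho_le fixset_hrho_eq_fixset_Gop[OF assms]
  unfolding prop5_concl_def by blast

end

lemma bind_pmf_Pn_stationary:
  assumes "stationary P mu"
  shows "bind_pmf mu (Pn P n) = mu"
proof (induction n)
  case 0
  show ?case by (simp add: bind_return_pmf')
next
  case (Suc n)
  have "bind_pmf mu (Pn P (Suc n)) = bind_pmf (bind_pmf mu (Pn P n)) P"
    unfolding bind_assoc_pmf by (rule arg_cong[where f = "bind_pmf mu"]) (simp add: fun_eq_iff)
  also have "\<dots> = mu"
    using Suc assms by (simp add: stationary_def)
  finally show ?case .
qed

lemma stationary_pmf_pos:
  assumes "stationary P mu" "irreducible_chain P"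
  shows "pmf mu j > 0"
proof -
  obtain i where "i \<in> set_pmf mu"
    using set_pmf_not_empty[of mu] by blast
  moreover obtain n where "pmf (Pn P n i) j > 0"
    using assms(2) by (auto simp: irreducible_chain_def)
  ultimately have "j \<in> set_pmf (bind_pmf mu (Pn P n))"
    by (auto simp: set_pmf_iff intro!: bexI[of _ i])
  then show ?thesis
    by (simp add: bind_pmf_Pn_stationary[OF assms(1)] pmf_positive)
qed

theorem proposition5:
  fixes th1 Dl :: real and d :: nat
    and P :: "('s::finite) \<Rightarrow> 's pmf" and mu :: "'s pmf"
    and R :: "'s \<Rightarrow> 's \<Rightarrow> real pmf"
  assumes "Dl > 0" and "d \<ge> 1"
    and "irreducible_chain P" and "aperiodic_chain P" and "stationary P mu"
    and "\<And>i j. finite (set_pmf (R i j))"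
    and "\<And>i j. set_pmf (R i j) \<subseteq> {0..1}"
  shows "(\<forall>rho :: 's pmf. (\<forall>i. pmf rho i > 0) \<longrightarrow> prop5_concl th1 Dl d mu P R rho)
         \<and> prop5_concl th1 Dl d mu P R mu"
proof -
  interpret categorical_td th1 Dl d mu P R
    by unfold_locales (use assms in auto)
  have "pmf mu i > 0" for i
    by (rule stationary_pmf_pos[OF assms(5,3)])
  then show ?thesis
    using prop5_concl_if_pos by blast
qed

end
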